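(* Let $R,S,R',S'$ be rings whose only idempotents are $0$ and $1$, $M$ an $R$-$S$-bimodule, $N$ an $S$-$R$-bimodule, $M'$ an $R'$-$S'$-bimodule and $N'$ an $S'$-$R'$-bimodule. Let $T=\left[\begin{smallmatrix} R & M\\ N & S\end{smallmatrix}\right]$ and $T'=\left[\begin{smallmatrix} R' & M'\\ N' & S'\end{smallmatrix}\right]$ be the associated Morita context rings with both Morita maps equal to zero. Then $\mathrm{Iso}_0(T,T')=\mathrm{Iso}(T,T')$, i.e. every ring isomorphism $T\to T'$ lies in $\mathrm{Iso}_0^0(T,T')\cup\mathrm{Iso}_0^1(T,T')$.
   Context: All rings have an identity $1\neq 0$. With zero Morita maps, $T$ is the set of formal matrices $\left[\begin{smallmatrix} r & m\\ n & s\end{smallmatrix}\right]$ ($r\in R,m\in M,n\in N,s\in S$) with entrywise addition and product $\left[\begin{smallmatrix} r & m\\ n & s\end{smallmatrix}\right]\left[\begin{smallmatrix} r' & m'\\ n' & s'\end{smallmatrix}\right]=\left[\begin{smallmatrix} rr' & rm'+ms'\\ nr'+sn' & ss'\end{smallmatrix}\right]$; similarly for $T'$. $\mathrm{Iso}(T,T')$ is the set of all ring isomorphisms $T\to T'$. $\mathrm{Iso}_0^0(T,T')$ is the set of maps $\phi\left(\left[\begin{smallmatrix} r & m\\ n & s\end{smallmatrix}\right]\right)=\left[\begin{smallmatrix}\gamma(r) & \gamma(r)m'_0-m'_0\delta(s)+u(m)\\ n'_0\gamma(r)-\delta(s)n'_0+v(n) & \delta(s)\end{smallmatrix}\right]$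 where $\gamma:R\to R'$, $\delta:S\to S'$ are ring isomorphisms, $u:M\to M'$ and $v:N\to N'$ are additive bijections with $u(rms)=\gamma(r)u(m)\delta(s)$ and $v(snr)=\delta(s)v(n)\gamma(r)$, and $m'_0\in M'$, $n'_0\in N'$ are arbitrary (the remaining defining conditions are automatic when all Morita maps are zero). $\mathrm{Iso}_0^1(T,T')$ is the set of maps $\psi\left(\left[\begin{smallmatrix} r & m\\ n & s\end{smallmatrix}\right]\right)=\left[\begin{smallmatrix}\sigma(s) & m'_*\rho(r)-\sigma(s)m'_*+\nu(n)\\ \rho(r)n'_*-n'_*\sigma(s)+\mu(m) & \rho(r)\end{smallmatrix}\right]$ where $\rho:R\to S'$, $\sigma:S\to R'$ are ring isomorphisms, $\mu:M\to N'$, $\nu:N\to M'$ are additive bijections with $\mu(rms)=\rho(r)\mu(m)\sigma(s)$ and $\nu(snr)=\sigma(s)\nu(n)\rho(r)$, and $m'_*\in M'$, $n'_*\in N'$ are arbitrary. $\mathrm{Iso}_0(T,T')=\mathrm{Iso}_0^0(T,T')\cup\mathrm{Iso}_0^1(T,T')$. *)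

theory Defs
  imports Main
begin

text \<open>The Morita context ring with zero Morita maps is represented by 4-tuples (r, m, n, s).\<close>

definition ring_iso_fun :: "('a::ring_1 \<Rightarrow> 'b::ring_1) \<Rightarrow> bool" where
  "ring_iso_fun g \<longleftrightarrow> bij g \<and> (\<forall>x y. g (x + y) = g x + g y) \<and>
     (\<forall>x y. g (x * y) = g x * g y) \<and> g 1 = 1"

definition only_trivial_idempotents :: "'a::ring_1 itself \<Rightarrow> bool" where
  "only_trivial_idempotents _ \<longleftrightarrow> (\<forall>e::'a. e * e = e \<longrightarrow> e = 0 \<or> e = 1)"

definition bimodule :: "('r::ring_1 \<Rightarrow> 'm::ab_group_add \<Rightarrow> 'm) \<Rightarrow> ('m \<Rightarrow> 's::ring_1 \<Rightarrow> 'm) \<Rightarrow> bool" where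
  "bimodule lm rm \<longleftrightarrow>
     (\<forall>r r' m. lm (r + r') m = lm r m + lm r' m) \<and>
     (\<forall>r m m'. lm r (m + m') = lm r m + lm r m') \<and>
     (\<forall>r r' m. lm (r * r') m = lm r (lm r' m)) \<and>
     (\<forall>m. lm 1 m = m) \<and>
     (\<forall>m s s'. rm m (s + s') = rm m s + rm m s') \<and>
     (\<forall>m m' s. rm (m + m') s = rm m s + rm m' s) \<and>
     (\<forall>m s s'. rm m (s * s') = rm (rm m s) s') \<and>
     (\<forall>m. rm m 1 = m) \<and>
     (\<forall>r m s. lm r (rm m s) = rm (lm r m) s)"

definition add_bij :: "('a::ab_group_add \<Rightarrow> 'b::ab_group_add) \<Rightarrow> bool" where
  "add_bij u \<longleftrightarrow> bij u \<and> (\<forall>x y. u (x + y) = u x + u y)"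

definition mc_add :: "('r::ring_1 \<times> 'm::ab_group_add \<times> 'n::ab_group_add \<times> 's::ring_1)
    \<Rightarrow> ('r \<times> 'm \<times> 'n \<times> 's) \<Rightarrow> ('r \<times> 'm \<times> 'n \<times> 's)" where
  "mc_add x y = (case x of (r, m, n, s) \<Rightarrow> case y of (r', m', n', s') \<Rightarrow>
      (r + r', m + m', n + n', s + s'))"

definition mc_mult :: "('r::ring_1 \<Rightarrow> 'm::ab_group_add \<Rightarrow> 'm) \<Rightarrow> ('m \<Rightarrow> 's::ring_1 \<Rightarrow> 'm) \<Rightarrow>
    ('s \<Rightarrow> 'n::ab_group_add \<Rightarrow> 'n) \<Rightarrow> ('n \<Rightarrow> 'r \<Rightarrow> 'n) \<Rightarrow>
    ('r \<times> 'm \<times> 'n \<times> 's) \<Rightarrow> ('r \<times> 'm \<times> 'n \<times> 's) \<Rightarrow> ('r \<times> 'm \<times> 'n \<times> 's)" where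
  "mc_mult lmM rmM lmN rmN x y = (case x of (r, m, n, s) \<Rightarrow> case y of (r', m', n', s') \<Rightarrow>
      (r * r', lmM r m' + rmM m s', rmN n r' + lmN s n', s * s'))"

definition mc_one :: "('r::ring_1 \<times> 'm::ab_group_add \<times> 'n::ab_group_add \<times> 's::ring_1)" where
  "mc_one = (1, 0, 0, 1)"

definition mc_Iso ::
  "('r::ring_1 \<Rightarrow> 'm::ab_group_add \<Rightarrow> 'm) \<Rightarrow> ('m \<Rightarrow> 's::ring_1 \<Rightarrow> 'm) \<Rightarrow>
   ('s \<Rightarrow> 'n::ab_group_add \<Rightarrow> 'n) \<Rightarrow> ('n \<Rightarrow> 'r \<Rightarrow> 'n) \<Rightarrow>
   ('r2::ring_1 \<Rightarrow> 'm2::ab_group_add \<Rightarrow> 'm2) \<Rightarrow> ('m2 \<Rightarrow> 's2::ring_1 \<Rightarrow> 'm2) \<Rightarrow>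
   ('s2 \<Rightarrow> 'n2::ab_group_add \<Rightarrow> 'n2) \<Rightarrow> ('n2 \<Rightarrow> 'r2 \<Rightarrow> 'n2) \<Rightarrow>
   (('r \<times> 'm \<times> 'n \<times> 's) \<Rightarrow> ('r2 \<times> 'm2 \<times> 'n2 \<times> 's2)) set" where
  "mc_Iso lmM rmM lmN rmN lmM' rmM' lmN' rmN' =
     {f. bij f \<and> (\<forall>x y. f (mc_add x y) = mc_add (f x) (f y)) \<and>
         (\<forall>x y. f (mc_mult lmM rmM lmN rmN x y) = mc_mult lmM' rmM' lmN' rmN' (f x) (f y)) \<and>
         f mc_one = mc_one}"

definition mc_Iso00 ::
  "('r::ring_1 \<Rightarrow> 'm::ab_group_add \<Rightarrow> 'm) \<Rightarrow> ('m \<Rightarrow> 's::ring_1 \<Rightarrow> 'm) \<Rightarrow>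
   ('s \<Rightarrow> 'n::ab_group_add \<Rightarrow> 'n) \<Rightarrow> ('n \<Rightarrow> 'r \<Rightarrow> 'n) \<Rightarrow>
   ('r2::ring_1 \<Rightarrow> 'm2::ab_group_add \<Rightarrow> 'm2) \<Rightarrow> ('m2 \<Rightarrow> 's2::ring_1 \<Rightarrow> 'm2) \<Rightarrow>
   ('s2 \<Rightarrow> 'n2::ab_group_add \<Rightarrow> 'n2) \<Rightarrow> ('n2 \<Rightarrow> 'r2 \<Rightarrow> 'n2) \<Rightarrow>
   (('r \<times> 'm \<times> 'n \<times> 's) \<Rightarrow> ('r2 \<times> 'm2 \<times> 'n2 \<times> 's2)) set" where
  "mc_Iso00 lmM rmM lmN rmN lmM' rmM' lmN' rmN' =
     {\<phi>. \<exists>(\<gamma>::'r \<Rightarrow> 'r2) (\<delta>::'s \<Rightarrow> 's2) (u::'m \<Rightarrow> 'm2) (v::'n \<Rightarrow> 'n2) m0 n0.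
         ring_iso_fun \<gamma> \<and> ring_iso_fun \<delta> \<and> add_bij u \<and> add_bij v \<and>
         (\<forall>r m s. u (lmM r (rmM m s)) = lmM' (\<gamma> r) (rmM' (u m) (\<delta> s))) \<and>
         (\<forall>s n r. v (lmN s (rmN n r)) = lmN' (\<delta> s) (rmN' (v n) (\<gamma> r))) \<and>
         (\<forall>r m n s. \<phi> (r, m, n, s) =
            (\<gamma> r, lmM' (\<gamma> r) m0 - rmM' m0 (\<delta> s) + u m,
             rmN' n0 (\<gamma> r) - lmN' (\<delta> s) n0 + v n, \<delta> s))}"

definition mc_Iso01 ::
  "('r::ring_1 \<Rightarrow> 'm::ab_group_add \<Rightarrow> 'm) \<Rightarrow> ('m \<Rightarrow> 's::ring_1 \<Rightarrow> 'm) \<Rightarrow>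
   ('s \<Rightarrow> 'n::ab_group_add \<Rightarrow> 'n) \<Rightarrow> ('n \<Rightarrow> 'r \<Rightarrow> 'n) \<Rightarrow>
   ('r2::ring_1 \<Rightarrow> 'm2::ab_group_add \<Rightarrow> 'm2) \<Rightarrow> ('m2 \<Rightarrow> 's2::ring_1 \<Rightarrow> 'm2) \<Rightarrow>
   ('s2 \<Rightarrow> 'n2::ab_group_add \<Rightarrow> 'n2) \<Rightarrow> ('n2 \<Rightarrow> 'r2 \<Rightarrow> 'n2) \<Rightarrow>
   (('r \<times> 'm \<times> 'n \<times> 's) \<Rightarrow> ('r2 \<times> 'm2 \<times> 'n2 \<times> 's2)) set" where
  "mc_Iso01 lmM rmM lmN rmN lmM' rmM' lmN' rmN' =
     {\<psi>. \<exists>(\<rho>::'r \<Rightarrow> 's2) (\<sigma>::'s \<Rightarrow> 'r2) (\<mu>::'m \<Rightarrow> 'n2) (\<nu>::'n \<Rightarrow> 'm2) ms ns.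
         ring_iso_fun \<rho> \<and> ring_iso_fun \<sigma> \<and> add_bij \<mu> \<and> add_bij \<nu> \<and>
         (\<forall>r m s. \<mu> (lmM r (rmM m s)) = lmN' (\<rho> r) (rmN' (\<mu> m) (\<sigma> s))) \<and>
         (\<forall>s n r. \<nu> (lmN s (rmN n r)) = lmM' (\<sigma> s) (rmM' (\<nu> n) (\<rho> r))) \<and>
         (\<forall>r m n s. \<psi> (r, m, n, s) =
            (\<sigma> s, rmM' ms (\<rho> r) - lmM' (\<sigma> s) ms + \<nu> n,
             lmN' (\<rho> r) ns - rmN' ns (\<sigma> s) + \<mu> m, \<rho> r))}"

definition mc_Iso0 where
  "mc_Iso0 lmM rmM lmN rmN lmM' rmM' lmN' rmN' =
     mc_Iso00 lmM rmM lmN rmN lmM' rmM' lmN' rmN' \<union> mc_Iso01 lmM rmM lmN rmN lmM' rmM' lmN' rmN'"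

end

theory Submission
  imports Defs "HOL.Modules"
begin

(* Idea.  e = (1,0,0,0) is an idempotent of T, so f e = (a,p,q,b) is an idempotent of T'; its
   diagonal entries a, b are idempotents of R', S', hence 0 or 1.  If a = b, idempotency forces
   p = q = 0, i.e. f e = 0 or f e = 1, contradicting injectivity of f.  So either
   f e = (1,p,q,0) or f e = (0,p,q,1).  In the first case the "corner sandwiches"
   x = e x e, e x (1-e), (1-e) x e, (1-e) x (1-e) show that f maps each corner of T into the
   corresponding corner of T' up to the translation by p and q, which is exactly the shape of
   Iso_0^0.  The second case reduces to the first by composing with the swap
   (r,m,n,s) |-> (s,n,m,r), which turns T' into the Morita ring with its two diagonal rings
   exchanged and interchanges Iso_0^0 and Iso_0^1. *)

lemma bimodule_laws:
  assumes "bimodule lm rm"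
  shows "lm (r + r') m = lm r m + lm r' m" "lm r (m + m') = lm r m + lm r m'"
    "lm r (lm r' m) = lm (r * r') m" "lm 1 m = m"
    "rm m (s + s') = rm m s + rm m s'" "rm (m + m') s = rm m s + rm m' s"
    "rm (rm m s) s' = rm m (s * s')" "rm m 1 = m" "lm r (rm m s) = rm (lm r m) s"
    and "lm r 0 = 0" "lm r (- m) = - lm r m" "lm r (m - m') = lm r m - lm r m'"
    and "lm 0 m = 0" "lm (- r) m = - lm r m" "lm (r - r') m = lm r m - lm r' m"
    and "rm 0 s = 0" "rm (- m) s = - rm m s" "rm (m - m') s = rm m s - rm m' s"
    and "rm m 0 = 0" "rm m (- s) = - rm m s" "rm m (s - s') = rm m s - rm m s'"
proof -
  note laws = assms[unfolded bimodule_def]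
  show "lm (r + r') m = lm r m + lm r' m" "lm r (m + m') = lm r m + lm r m'"
    "lm r (lm r' m) = lm (r * r') m" "lm 1 m = m"
    "rm m (s + s') = rm m s + rm m s'" "rm (m + m') s = rm m s + rm m' s"
    "rm (rm m s) s' = rm m (s * s')" "rm m 1 = m" "lm r (rm m s) = rm (lm r m) s"
    using laws by simp_all
  interpret left_in_module: additive "lm r" by standard (simp add: laws)
  interpret left_in_scalar: additive "\<lambda>r. lm r m" by standard (simp add: laws)
  interpret right_in_module: additive "\<lambda>m. rm m s" by standard (simp add: laws)
  interpret right_in_scalar: additive "rm m" by standard (simp add: laws)
  show "lm r 0 = 0" "lm r (- m) = - lm r m" "lm r (m - m') = lm r m - lm r m'"
    by (fact left_in_module.zero left_in_module.minus left_in_module.diff)+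
  show "lm 0 m = 0" "lm (- r) m = - lm r m" "lm (r - r') m = lm r m - lm r' m"
    by (fact left_in_scalar.zero left_in_scalar.minus left_in_scalar.diff)+
  show "rm 0 s = 0" "rm (- m) s = - rm m s" "rm (m - m') s = rm m s - rm m' s"
    by (fact right_in_module.zero right_in_module.minus right_in_module.diff)+
  show "rm m 0 = 0" "rm m (- s) = - rm m s" "rm m (s - s') = rm m s - rm m s'"
    by (fact right_in_scalar.zero right_in_scalar.minus right_in_scalar.diff)+
qed

lemma bimodule_map_sides:
  assumes M: "bimodule lm rm" and M': "bimodule lm' rm'"
    and compat: "\<And>r m s. u (lm r (rm m s)) = lm' (g r) (rm' (u m) (h s))"
    and "g 1 = 1" and "h 1 = 1"
  shows "u (lm r m) = lm' (g r) (u m)" and "u (rm m s) = rm' (u m) (h s)"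
proof -
  have "u (lm r m) = u (lm r (rm m 1))" by (simp add: bimodule_laws[OF M])
  also have "\<dots> = lm' (g r) (u m)" by (simp add: compat bimodule_laws[OF M'] \<open>h 1 = 1\<close>)
  finally show "u (lm r m) = lm' (g r) (u m)" .
  have "u (rm m s) = u (lm 1 (rm m s))" by (simp add: bimodule_laws[OF M])
  also have "\<dots> = rm' (u m) (h s)" by (simp add: compat bimodule_laws[OF M'] \<open>g 1 = 1\<close>)
  finally show "u (rm m s) = rm' (u m) (h s)" .
qed

(* This is the shape of
   every element of Iso_0^0. *)
lemma triangular_bij:
  fixes c :: "'r \<Rightarrow> 's \<Rightarrow> 'x::ab_group_add" and d :: "'r \<Rightarrow> 's \<Rightarrow> 'y::ab_group_add"
  assumes "bij g" and "bij u" and "bij v" and "bij h"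
  shows "bij (\<lambda>(r, m, n, s). (g r, c r s + u m, d r s + v n, h s))" (is "bij ?F")
proof (rule bijI)
  show "inj ?F"
  proof (rule injI)
    fix x y
    assume eq: "?F x = ?F y"
    obtain r m n s where x: "x = (r, m, n, s)" by (cases x rule: prod_cases4)
    obtain r' m' n' s' where y: "y = (r', m', n', s')" by (cases y rule: prod_cases4)
    from eq have "g r = g r'" and "h s = h s'" by (simp_all add: x y)
    then have "r = r'" and "s = s'"
      using assms(1,4) by (simp_all add: bij_is_inj inj_eq)
    with eq have "u m = u m'" and "v n = v n'" by (simp_all add: x y)
    then have "m = m'" and "n = n'"
      using assms(2,3) by (simp_all add: bij_is_inj inj_eq)
    with \<open>r = r'\<close> \<open>s = s'\<close> show "x = y" by (simp add: x y)
  qed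
  show "surj ?F"
  proof (unfold surj_def, clarify)
    fix a x y b
    have right_inverse: "g (inv g a) = a" "h (inv h b) = b" "u (inv u z) = z" "v (inv v z') = z'"
      for z z' using assms by (simp_all add: bij_is_surj surj_f_inv_f)
    define r s where "r = inv g a" and "s = inv h b"
    have "(a, x, y, b) = ?F (r, inv u (x - c r s), inv v (y - d r s), s)"
      unfolding r_def s_def by (simp add: right_inverse)
    then show "\<exists>z. (a, x, y, b) = ?F z" by (rule exI)
  qed
qed

(* Exchanging the two diagonal and the two off-diagonal entries identifies the Morita ring
   built from (R',M',N',S') with the one built from (S',N',M',R'). *)
definition swp :: "'a \<times> 'b \<times> 'c \<times> 'd \<Rightarrow> 'd \<times> 'c \<times> 'b \<times> 'a" where
  "swp = (\<lambda>(a, b, c, d). (d, c, b, a))"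

lemma swp_swp [simp]: "swp (swp x) = x"
  by (cases x rule: prod_cases4) (simp add: swp_def)

lemma swp_comp_swp [simp]: "swp \<circ> (swp \<circ> f) = f"
  by (rule ext) simp

lemma bij_swp: "bij swp"
  by (rule o_bij[of swp]) (simp_all add: fun_eq_iff)

lemma swp_mc_add: "swp (mc_add x y) = mc_add (swp x) (swp y)"
  by (cases x rule: prod_cases4; cases y rule: prod_cases4) (simp add: swp_def mc_add_def)

lemma swp_mc_mult:
  "swp (mc_mult lmM rmM lmN rmN x y) = mc_mult lmN rmN lmM rmM (swp x) (swp y)"
  by (cases x rule: prod_cases4; cases y rule: prod_cases4) (simp add: swp_def mc_mult_def add.commute)

lemma swp_mc_one: "swp mc_one = mc_one"
  by (simp add: swp_def mc_one_def)

lemma swp_comp_Iso: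
  assumes "f \<in> mc_Iso lmM rmM lmN rmN lmM' rmM' lmN' rmN'"
  shows "swp \<circ> f \<in> mc_Iso lmM rmM lmN rmN lmN' rmN' lmM' rmM'"
proof -
  have "bij f" using assms by (simp add: mc_Iso_def)
  then have "bij (swp \<circ> f)" using bij_swp by (rule bij_comp)
  with assms show ?thesis by (simp add: mc_Iso_def swp_mc_add swp_mc_mult swp_mc_one)
qed

lemma swp_comp_Iso00:
  assumes "g \<in> mc_Iso00 lmM rmM lmN rmN lmN' rmN' lmM' rmM'"
  shows "swp \<circ> g \<in> mc_Iso01 lmM rmM lmN rmN lmM' rmM' lmN' rmN'"
proof -
  from assms obtain \<gamma> \<delta> u v m0 n0 where iso_parts: "ring_iso_fun \<gamma>" "ring_iso_fun \<delta>"
      "add_bij u" "add_bij v"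
    and compat: "\<forall>r m s. u (lmM r (rmM m s)) = lmN' (\<gamma> r) (rmN' (u m) (\<delta> s))"
      "\<forall>s n r. v (lmN s (rmN n r)) = lmM' (\<delta> s) (rmM' (v n) (\<gamma> r))"
    and g: "\<And>r m n s. g (r, m, n, s) = (\<gamma> r, lmN' (\<gamma> r) m0 - rmN' m0 (\<delta> s) + u m,
        rmM' n0 (\<gamma> r) - lmM' (\<delta> s) n0 + v n, \<delta> s)"
    unfolding mc_Iso00_def by blast
  show ?thesis
    unfolding mc_Iso01_def using iso_parts compat
    by (intro CollectI exI[of _ \<gamma>] exI[of _ \<delta>] exI[of _ u] exI[of _ v] exI[of _ n0] exI[of _ m0])
      (simp add: g swp_def)
qed

lemma swp_comp_Iso01:
  assumes "g \<in> mc_Iso01 lmM rmM lmN rmN lmM' rmM' lmN' rmN'"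
  shows "swp \<circ> g \<in> mc_Iso00 lmM rmM lmN rmN lmN' rmN' lmM' rmM'"
proof -
  from assms obtain \<rho> \<sigma> \<mu> \<nu> ms ns where iso_parts: "ring_iso_fun \<rho>" "ring_iso_fun \<sigma>"
      "add_bij \<mu>" "add_bij \<nu>"
    and compat: "\<forall>r m s. \<mu> (lmM r (rmM m s)) = lmN' (\<rho> r) (rmN' (\<mu> m) (\<sigma> s))"
      "\<forall>s n r. \<nu> (lmN s (rmN n r)) = lmM' (\<sigma> s) (rmM' (\<nu> n) (\<rho> r))"
    and g: "\<And>r m n s. g (r, m, n, s) = (\<sigma> s, rmM' ms (\<rho> r) - lmM' (\<sigma> s) ms + \<nu> n,
        lmN' (\<rho> r) ns - rmN' ns (\<sigma> s) + \<mu> m, \<rho> r)"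
    unfolding mc_Iso01_def by blast
  show ?thesis
    unfolding mc_Iso00_def using iso_parts compat
    by (intro CollectI exI[of _ \<rho>] exI[of _ \<sigma>] exI[of _ \<mu>] exI[of _ \<nu>] exI[of _ ns] exI[of _ ms])
      (simp add: g swp_def)
qed

locale zero_morita_pair =
  fixes lmM :: "'r::ring_1 \<Rightarrow> 'm::ab_group_add \<Rightarrow> 'm" and rmM :: "'m \<Rightarrow> 's::ring_1 \<Rightarrow> 'm"
    and lmN :: "'s \<Rightarrow> 'n::ab_group_add \<Rightarrow> 'n" and rmN :: "'n \<Rightarrow> 'r \<Rightarrow> 'n"
    and lmM' :: "'r2::ring_1 \<Rightarrow> 'm2::ab_group_add \<Rightarrow> 'm2" and rmM' :: "'m2 \<Rightarrow> 's2::ring_1 \<Rightarrow> 'm2"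
    and lmN' :: "'s2 \<Rightarrow> 'n2::ab_group_add \<Rightarrow> 'n2" and rmN' :: "'n2 \<Rightarrow> 'r2 \<Rightarrow> 'n2"
  assumes bimodule_M: "bimodule lmM rmM" and bimodule_N: "bimodule lmN rmN"
    and bimodule_M': "bimodule lmM' rmM'" and bimodule_N': "bimodule lmN' rmN'"
begin

abbreviation "mult \<equiv> mc_mult lmM rmM lmN rmN"
abbreviation "mult' \<equiv> mc_mult lmM' rmM' lmN' rmN'"
abbreviation "Iso \<equiv> mc_Iso lmM rmM lmN rmN lmM' rmM' lmN' rmN'"
abbreviation "Iso00 \<equiv> mc_Iso00 lmM rmM lmN rmN lmM' rmM' lmN' rmN'"
abbreviation "Iso01 \<equiv> mc_Iso01 lmM rmM lmN rmN lmM' rmM' lmN' rmN'"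
abbreviation "Iso0 \<equiv> mc_Iso0 lmM rmM lmN rmN lmM' rmM' lmN' rmN'"

lemmas module_laws = bimodule_laws[OF bimodule_M] bimodule_laws[OF bimodule_N]
  bimodule_laws[OF bimodule_M'] bimodule_laws[OF bimodule_N']

lemma Iso00_subset_Iso: "Iso00 \<subseteq> Iso"
proof
  fix \<phi> assume "\<phi> \<in> Iso00"
  then obtain \<gamma> \<delta> u v m0 n0 where \<gamma>: "ring_iso_fun \<gamma>" and \<delta>: "ring_iso_fun \<delta>"
    and u: "add_bij u" and v: "add_bij v"
    and compat_u: "\<And>r m s. u (lmM r (rmM m s)) = lmM' (\<gamma> r) (rmM' (u m) (\<delta> s))"
    and compat_v: "\<And>s n r. v (lmN s (rmN n r)) = lmN' (\<delta> s) (rmN' (v n) (\<gamma> r))"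
    and \<phi>: "\<And>r m n s. \<phi> (r, m, n, s) = (\<gamma> r, lmM' (\<gamma> r) m0 - rmM' m0 (\<delta> s) + u m,
        rmN' n0 (\<gamma> r) - lmN' (\<delta> s) n0 + v n, \<delta> s)"
    unfolding mc_Iso00_def by blast
  have \<gamma>_hom: "\<gamma> (a + b) = \<gamma> a + \<gamma> b" "\<gamma> (a * b) = \<gamma> a * \<gamma> b" "\<gamma> 1 = 1" for a b
    using \<gamma> by (simp_all add: ring_iso_fun_def)
  have \<delta>_hom: "\<delta> (a + b) = \<delta> a + \<delta> b" "\<delta> (a * b) = \<delta> a * \<delta> b" "\<delta> 1 = 1" for a b
    using \<delta> by (simp_all add: ring_iso_fun_def)
  interpret \<gamma>: additive \<gamma> by standard (fact \<gamma>_hom)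
  interpret \<delta>: additive \<delta> by standard (fact \<delta>_hom)
  interpret u: additive u by standard (use u in \<open>simp add: add_bij_def\<close>)
  interpret v: additive v by standard (use v in \<open>simp add: add_bij_def\<close>)
  note one_sided = bimodule_map_sides[OF bimodule_M bimodule_M' compat_u \<gamma>_hom(3) \<delta>_hom(3)]
    bimodule_map_sides[OF bimodule_N bimodule_N' compat_v \<delta>_hom(3) \<gamma>_hom(3)]
  have "\<phi> = (\<lambda>(r, m, n, s). (\<gamma> r, (lmM' (\<gamma> r) m0 - rmM' m0 (\<delta> s)) + u m,
      (rmN' n0 (\<gamma> r) - lmN' (\<delta> s) n0) + v n, \<delta> s))"
    by (auto simp: \<phi>)
  then have "bij \<phi>"
    using \<gamma> \<delta> u v by (simp add: triangular_bij ring_iso_fun_def add_bij_def)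
  moreover have "\<phi> (mc_add x y) = mc_add (\<phi> x) (\<phi> y)" for x y
    by (cases x rule: prod_cases4; cases y rule: prod_cases4)
      (simp add: mc_add_def \<phi> \<gamma>.add \<delta>.add u.add v.add module_laws algebra_simps)
  moreover have "\<phi> (mult x y) = mult' (\<phi> x) (\<phi> y)" for x y
    by (cases x rule: prod_cases4; cases y rule: prod_cases4)
      (simp add: mc_mult_def \<phi> \<gamma>.add \<delta>.add u.add v.add \<gamma>_hom \<delta>_hom one_sided module_laws algebra_simps)
  moreover have "\<phi> mc_one = mc_one"
    by (simp add: mc_one_def \<phi> \<gamma>_hom \<delta>_hom \<gamma>.zero \<delta>.zero u.zero v.zero module_laws)
  ultimately show "\<phi> \<in> Iso" unfolding mc_Iso_def by blast
qed

end

(* An isomorphism f : T -> T' sending the idempotent (1,0,0,0) to (1,p,q,0).  Its restrictions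
   to the four corners of T define the data gamma, delta, u, v of an element of Iso_0^0. *)
locale iso_first_corner = zero_morita_pair +
  fixes f and p and q
  assumes iso: "f \<in> mc_Iso lmM rmM lmN rmN lmM' rmM' lmN' rmN'"
    and first_corner: "f (1, 0, 0, 0) = (1, p, q, 0)"
begin

lemma f_bij: "bij f"
  and f_add: "f (mc_add x y) = mc_add (f x) (f y)"
  and f_mult: "f (mult x y) = mult' (f x) (f y)"
  and f_one: "f mc_one = mc_one"
  using iso unfolding mc_Iso_def by blast+

(* The complementary idempotent (0,0,0,1) = 1 - (1,0,0,0) goes to 1 - (1,p,q,0). *)
lemma second_corner: "f (0, 0, 0, 1) = (0, - p, - q, 1)"
proof -
  have "mc_add (f (1, 0, 0, 0)) (f (0, 0, 0, 1)) = mc_one"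
    using f_add[of "(1, 0, 0, 0)" "(0, 0, 0, 1)"] f_one by (simp add: mc_add_def mc_one_def)
  then show ?thesis
    using first_corner by (cases "f (0, 0, 0, 1)" rule: prod_cases4)
      (simp add: mc_add_def mc_one_def eq_neg_iff_add_eq_0 add.commute)
qed

(* Corners are computed by multiplying with the two idempotents on both sides. *)
lemma f_sandwich: "f (mult (mult a x) b) = mult' (mult' (f a) (f x)) (f b)"
  by (simp add: f_mult)

definition \<gamma> where "\<gamma> r = fst (f (r, 0, 0, 0))"
definition \<delta> where "\<delta> s = snd (snd (snd (f (0, 0, 0, s))))"
definition u where "u m = fst (snd (f (0, m, 0, 0)))"
definition v where "v n = fst (snd (snd (f (0, 0, n, 0))))"

lemma f_R: "f (r, 0, 0, 0) = (\<gamma> r, lmM' (\<gamma> r) p, rmN' q (\<gamma> r), 0)"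
  using f_sandwich[of "(1, 0, 0, 0)" "(r, 0, 0, 0)" "(1, 0, 0, 0)"] first_corner
  unfolding \<gamma>_def by (cases "f (r, 0, 0, 0)" rule: prod_cases4) (simp add: mc_mult_def module_laws)

lemma f_S: "f (0, 0, 0, s) = (0, - rmM' p (\<delta> s), - lmN' (\<delta> s) q, \<delta> s)"
  using f_sandwich[of "(0, 0, 0, 1)" "(0, 0, 0, s)" "(0, 0, 0, 1)"] second_corner
  unfolding \<delta>_def by (cases "f (0, 0, 0, s)" rule: prod_cases4) (simp add: mc_mult_def module_laws)

lemma f_M: "f (0, m, 0, 0) = (0, u m, 0, 0)"
  using f_sandwich[of "(1, 0, 0, 0)" "(0, m, 0, 0)" "(0, 0, 0, 1)"] first_corner second_corner
  unfolding u_def by (cases "f (0, m, 0, 0)" rule: prod_cases4) (simp add: mc_mult_def module_laws)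

lemma f_N: "f (0, 0, n, 0) = (0, 0, v n, 0)"
  using f_sandwich[of "(0, 0, 0, 1)" "(0, 0, n, 0)" "(1, 0, 0, 0)"] first_corner second_corner
  unfolding v_def by (cases "f (0, 0, n, 0)" rule: prod_cases4) (simp add: mc_mult_def module_laws)

(* Additivity assembles the four corners into the explicit form required by Iso_0^0. *)
lemma f_formula: "f (r, m, n, s) = (\<gamma> r, lmM' (\<gamma> r) p - rmM' p (\<delta> s) + u m,
    rmN' q (\<gamma> r) - lmN' (\<delta> s) q + v n, \<delta> s)"
proof -
  have "(r, m, n, s) = mc_add (r, 0, 0, 0) (mc_add (0, m, 0, 0) (mc_add (0, 0, n, 0) (0, 0, 0, s)))"
    by (simp add: mc_add_def)
  then have "f (r, m, n, s) =
      mc_add (f (r, 0, 0, 0)) (mc_add (f (0, m, 0, 0)) (mc_add (f (0, 0, n, 0)) (f (0, 0, 0, s))))"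
    by (simp add: f_add)
  then show ?thesis by (simp add: f_R f_S f_M f_N mc_add_def algebra_simps)
qed

lemma components_additive:
  "\<gamma> (r + r') = \<gamma> r + \<gamma> r'" "\<delta> (s + s') = \<delta> s + \<delta> s'"
  "u (m + m') = u m + u m'" "v (n + n') = v n + v n'"
  using f_add[of "(r, 0, 0, 0)" "(r', 0, 0, 0)"] f_add[of "(0, 0, 0, s)" "(0, 0, 0, s')"]
    f_add[of "(0, m, 0, 0)" "(0, m', 0, 0)"] f_add[of "(0, 0, n, 0)" "(0, 0, n', 0)"]
  by (simp_all add: mc_add_def f_R f_S f_M f_N)

lemma components_multiplicative:
  "\<gamma> (r * r') = \<gamma> r * \<gamma> r'" "\<delta> (s * s') = \<delta> s * \<delta> s'"
  using f_mult[of "(r, 0, 0, 0)" "(r', 0, 0, 0)"] f_mult[of "(0, 0, 0, s)" "(0, 0, 0, s')"]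
  by (simp_all add: mc_mult_def f_R f_S module_laws)

lemma components_unital: "\<gamma> 1 = 1" "\<delta> 1 = 1"
  using first_corner second_corner by (simp_all add: \<gamma>_def \<delta>_def)

lemma components_inj: "inj \<gamma>" "inj \<delta>" "inj u" "inj v"
proof -
  have inj_f: "f x = f y \<Longrightarrow> x = y" for x y
    using f_bij by (simp add: bij_is_inj inj_eq)
  have "\<gamma> a = \<gamma> b \<Longrightarrow> a = b" "\<delta> a' = \<delta> b' \<Longrightarrow> a' = b'"
    "u m = u m' \<Longrightarrow> m = m'" "v n = v n' \<Longrightarrow> n = n'" for a b a' b' m m' n n'
    using inj_f[of "(a, 0, 0, 0)" "(b, 0, 0, 0)"] inj_f[of "(0, 0, 0, a')" "(0, 0, 0, b')"]
      inj_f[of "(0, m, 0, 0)" "(0, m', 0, 0)"] inj_f[of "(0, 0, n, 0)" "(0, 0, n', 0)"]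
    by (simp_all add: f_R f_S f_M f_N)
  then show "inj \<gamma>" "inj \<delta>" "inj u" "inj v"
    by (meson injI)+
qed

lemma components_surj: "surj \<gamma>" "surj \<delta>" "surj u" "surj v"
proof -
  have preimage: "\<exists>r m n s. f (r, m, n, s) = z" for z
    using f_bij by (metis bij_pointE prod_cases4)
  have "a \<in> range \<gamma> \<and> b \<in> range \<delta>" for a b
    using preimage[of "(a, 0, 0, b)"] by (auto simp: f_formula)
  moreover have "x \<in> range u \<and> y \<in> range v" for x y
    using preimage[of "(0, x, y, 0)"] by (auto simp: f_formula module_laws)
  ultimately show "surj \<gamma>" "surj \<delta>" "surj u" "surj v"
    by blast+
qed

lemma compat_u: "u (lmM r (rmM m s)) = lmM' (\<gamma> r) (rmM' (u m) (\<delta> s))"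
  using f_sandwich[of "(r, 0, 0, 0)" "(0, m, 0, 0)" "(0, 0, 0, s)"]
  by (simp add: mc_mult_def f_R f_S f_M module_laws)

lemma compat_v: "v (lmN s (rmN n r)) = lmN' (\<delta> s) (rmN' (v n) (\<gamma> r))"
  using f_sandwich[of "(0, 0, 0, s)" "(0, 0, n, 0)" "(r, 0, 0, 0)"]
  by (simp add: mc_mult_def f_R f_S f_N module_laws)

theorem in_Iso00: "f \<in> Iso00"
proof -
  have "ring_iso_fun \<gamma>" "ring_iso_fun \<delta>" "add_bij u" "add_bij v"
    using components_additive components_multiplicative components_unital
      components_inj components_surj
    by (simp_all add: ring_iso_fun_def add_bij_def bij_def)
  then show ?thesis
    unfolding mc_Iso00_def using compat_u compat_v f_formula by blast
qed

end

context zero_morita_pair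
begin

(* The easy inclusion: elements of Iso_0^1 are swaps of elements of Iso_0^0. *)
lemma Iso0_subset_Iso: "Iso0 \<subseteq> Iso"
proof
  interpret swapped: zero_morita_pair lmM rmM lmN rmN lmN' rmN' lmM' rmM'
    by unfold_locales (fact bimodule_M bimodule_N bimodule_N' bimodule_M')+
  fix f assume "f \<in> Iso0"
  then consider "f \<in> Iso00" | "f \<in> Iso01" unfolding mc_Iso0_def by blast
  then show "f \<in> Iso"
  proof cases
    case 1
    then show ?thesis using Iso00_subset_Iso by blast
  next
    case 2
    then have "swp \<circ> f \<in> swapped.Iso"
      using swapped.Iso00_subset_Iso swp_comp_Iso01 by blast
    then show ?thesis using swp_comp_Iso[of "swp \<circ> f"] by simp
  qed
qed

lemma idempotent_with_equal_diagonal: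
  assumes idem: "mult' (a, p, q, b) (a, p, q, b) = (a, p, q, b)"
    and diagonal: "(a = 0 \<and> b = 0) \<or> (a = 1 \<and> b = 1)"
  shows "(a, p, q, b) = (0, 0, 0, 0) \<or> (a, p, q, b) = mc_one"
proof -
  from idem have p: "lmM' a p + rmM' p b = p" and q: "rmN' q a + lmN' b q = q"
    by (simp_all add: mc_mult_def)
  from diagonal show ?thesis
  proof
    assume "a = 0 \<and> b = 0"
    with p q show ?thesis by (simp add: module_laws)
  next
    assume "a = 1 \<and> b = 1"
    with p q have "p + p = p" and "q + q = q" by (simp_all add: module_laws)
    with \<open>a = 1 \<and> b = 1\<close> show ?thesis by (simp add: mc_one_def)
  qed
qed

lemma first_corner_image:
  assumes f: "f \<in> Iso" and "(0::'r) \<noteq> 1" and "(0::'s) \<noteq> 1"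
    and "only_trivial_idempotents TYPE('r2)" and "only_trivial_idempotents TYPE('s2)"
  obtains p q where "f (1, 0, 0, 0) = (1, p, q, 0)" | p q where "f (1, 0, 0, 0) = (0, p, q, 1)"
proof -
  from f have inj_f: "inj f" and f_add: "f (mc_add x y) = mc_add (f x) (f y)"
    and f_mult: "f (mult x y) = mult' (f x) (f y)" and f_one: "f mc_one = mc_one" for x y
    unfolding mc_Iso_def by (blast dest: bij_is_inj)+
  obtain a p q b where E: "f (1, 0, 0, 0) = (a, p, q, b)" by (cases "f (1, 0, 0, 0)" rule: prod_cases4)
  have "mult (1, 0, 0, 0) (1, 0, 0, 0) = (1, 0, 0, 0)" by (simp add: mc_mult_def module_laws)
  then have idem: "mult' (a, p, q, b) (a, p, q, b) = (a, p, q, b)" using f_mult E by metis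
  then have "a * a = a" and "b * b = b" by (simp_all add: mc_mult_def)
  then have "a = 0 \<or> a = 1" and "b = 0 \<or> b = 1"
    using assms(4,5) by (simp_all add: only_trivial_idempotents_def)
  moreover have "f (0, 0, 0, 0) = (0, 0, 0, 0)"
    using f_add[of "(0, 0, 0, 0)" "(0, 0, 0, 0)"]
    by (cases "f (0, 0, 0, 0)" rule: prod_cases4) (simp add: mc_add_def)
  then have "(a, p, q, b) \<noteq> (0, 0, 0, 0)"
    using E inj_f assms(2) by (metis injD prod.inject)
  moreover have "(a, p, q, b) \<noteq> mc_one"
    using E inj_f f_one assms(3) by (metis injD mc_one_def prod.inject)
  ultimately have "(a = 1 \<and> b = 0) \<or> (a = 0 \<and> b = 1)"
    using idempotent_with_equal_diagonal[OF idem] by blast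
  then show thesis using E that by blast
qed

(* The main inclusion; the second case is the first one for the swapped target ring. *)
lemma Iso_subset_Iso0:
  assumes "(0::'r) \<noteq> 1" and "(0::'s) \<noteq> 1"
    and "only_trivial_idempotents TYPE('r2)" and "only_trivial_idempotents TYPE('s2)"
  shows "Iso \<subseteq> Iso0"
proof
  fix f assume f: "f \<in> Iso"
  from f assms show "f \<in> Iso0"
  proof (cases rule: first_corner_image)
    case (1 p q)
    interpret iso_first_corner lmM rmM lmN rmN lmM' rmM' lmN' rmN' f p q
      using f 1 by unfold_locales
    show ?thesis using in_Iso00 unfolding mc_Iso0_def by blast
  next
    case (2 p q)
    interpret swapped: iso_first_corner lmM rmM lmN rmN lmN' rmN' lmM' rmM' "swp \<circ> f" q p
      using swp_comp_Iso[OF f] 2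
      by unfold_locales (simp_all add: swp_def bimodule_M bimodule_N bimodule_N' bimodule_M')
    have "swp \<circ> (swp \<circ> f) \<in> Iso01"
      using swapped.in_Iso00 by (rule swp_comp_Iso00)
    then show ?thesis unfolding mc_Iso0_def by simp
  qed
qed

end

theorem theorem4p7:
  fixes lmM :: "'r::ring_1 \<Rightarrow> 'm::ab_group_add \<Rightarrow> 'm" and rmM :: "'m \<Rightarrow> 's::ring_1 \<Rightarrow> 'm"
    and lmN :: "'s \<Rightarrow> 'n::ab_group_add \<Rightarrow> 'n" and rmN :: "'n \<Rightarrow> 'r \<Rightarrow> 'n"
    and lmM' :: "'r2::ring_1 \<Rightarrow> 'm2::ab_group_add \<Rightarrow> 'm2" and rmM' :: "'m2 \<Rightarrow> 's2::ring_1 \<Rightarrow> 'm2"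
    and lmN' :: "'s2 \<Rightarrow> 'n2::ab_group_add \<Rightarrow> 'n2" and rmN' :: "'n2 \<Rightarrow> 'r2 \<Rightarrow> 'n2"
  assumes "(0::'r) \<noteq> 1" and "(0::'s) \<noteq> 1" and "(0::'r2) \<noteq> 1" and "(0::'s2) \<noteq> 1"
    and "only_trivial_idempotents TYPE('r)" and "only_trivial_idempotents TYPE('s)"
    and "only_trivial_idempotents TYPE('r2)" and "only_trivial_idempotents TYPE('s2)"
    and "bimodule lmM rmM" and "bimodule lmN rmN"
    and "bimodule lmM' rmM'" and "bimodule lmN' rmN'"
  shows "mc_Iso0 lmM rmM lmN rmN lmM' rmM' lmN' rmN' = mc_Iso lmM rmM lmN rmN lmM' rmM' lmN' rmN'"
proof -
  interpret zero_morita_pair lmM rmM lmN rmN lmM' rmM' lmN' rmN'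
    using assms(9-12) by unfold_locales
  show ?thesis
    using Iso0_subset_Iso Iso_subset_Iso0[OF assms(1,2,7,8)] by (rule equalityI)
qed

end
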